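(* Let $c\ge 0$ be a constant integer and let $f:\{0,1\}^n\to\{0,1\}^{n+c}$ be computable by polynomial-size circuits. Let $T_1(n)=\{x\in\{0,1\}^n: |f^{-1}(f(x))|=1\}$. If there exist a polynomial $p$ and infinitely many $n$ such that $$\frac{|T_1(n)|}{2^n}\ \ge\ \frac{2^{1+c}}{2^{1+c}+1}+\frac{1}{p(n)},$$ then $f$ does not have a super-core. In particular, for length-preserving $f$ ($c=0$) the condition reads $|T_1(n)|/2^n\ge 2/3+1/p(n)$.
   Context: A predicate $b$ computable by polynomial-size circuits is a super-core of $f:\{0,1\}^n\to\{0,1\}^{m(n)}$ if there do not exist a nondeterministic polynomial-size circuit family $\mathcal{A}_1$ (accepting iff some witness gives output 1), a co-nondeterministic polynomial-size circuit family $\mathcal{A}_2$ (rejecting iff some witness gives output 0), a polynomial $p$ and infinitely many $n$ such that either $\Pr_{x\in\{0,1\}^n}[\mathcal{A}_1(f(x),1^n)=b(x)=0]+\tfrac12\Pr_{y\in\{0,1\}^{m(n)}}[\mathcal{A}_1(y,1^n)=1]\ge \tfrac12+\tfrac1{p(n)}$ or $\Pr_{x}[\mathcal{A}_2(f(x),1^n)=b(x)=1]+\tfrac12\Pr_{y}[\mathcal{A}_2(y,1^n)=0]\ge \tfrac12+\tfrac1{p(n)}$ (uniform distributions). *)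

theory Defs
  imports Complex_Main
begin

text \<open>A circuit is a list of gates (wire i is the
output of gate i; gates may only reference earlier wires) together with a
list of output wires.\<close>

datatype gate = Input nat | Const bool | Not nat | And nat nat | Or nat nat

type_synonym circuit = "gate list \<times> nat list"

definition wire :: "bool list \<Rightarrow> nat \<Rightarrow> bool" where
  "wire ws i = (i < length ws \<and> ws ! i)"

fun gate_val :: "gate \<Rightarrow> bool list \<Rightarrow> bool list \<Rightarrow> bool" where
  "gate_val (Input i) x ws = (i < length x \<and> x ! i)"
| "gate_val (Const b) x ws = b"
| "gate_val (Not i) x ws = (\<not> wire ws i)"
| "gate_val (And i j) x ws = (wire ws i \<and> wire ws j)"
| "gate_val (Or i j) x ws = (wire ws i \<or> wire ws j)"

fun eval_gates :: "gate list \<Rightarrow> bool list \<Rightarrow> bool list \<Rightarrow> bool list" where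
  "eval_gates [] x ws = ws"
| "eval_gates (g # gs) x ws = eval_gates gs x (ws @ [gate_val g x ws])"

definition eval_circuit :: "circuit \<Rightarrow> bool list \<Rightarrow> bool list" where
  "eval_circuit C x = map (wire (eval_gates (fst C) x [])) (snd C)"

definition circuit_size :: "circuit \<Rightarrow> nat" where
  "circuit_size C = length (fst C) + length (snd C)"

text \<open>Single output bit of a decision circuit (malformed circuits output 0).\<close>
definition cbit :: "circuit \<Rightarrow> bool list \<Rightarrow> bool" where
  "cbit C x = (eval_circuit C x = [True])"

definition poly_bounded :: "(nat \<Rightarrow> nat) \<Rightarrow> bool" where
  "poly_bounded q \<longleftrightarrow> (\<exists>k. \<forall>n. q n \<le> n ^ k + k)"

definition pos_poly :: "(nat \<Rightarrow> nat) \<Rightarrow> bool" where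
  "pos_poly p \<longleftrightarrow> poly_bounded p \<and> (\<forall>n. p n > 0)"

definition bitstrings :: "nat \<Rightarrow> bool list set" where
  "bitstrings n = {x. length x = n}"

definition poly_circuit_fun :: "(bool list \<Rightarrow> bool list) \<Rightarrow> bool" where
  "poly_circuit_fun f \<longleftrightarrow> (\<exists>q. poly_bounded q \<and> (\<forall>n. \<exists>C. circuit_size C \<le> q n \<and>
      (\<forall>x\<in>bitstrings n. eval_circuit C x = f x)))"

definition poly_circuit_pred :: "(bool list \<Rightarrow> bool) \<Rightarrow> bool" where
  "poly_circuit_pred b \<longleftrightarrow> (\<exists>q. poly_bounded q \<and> (\<forall>n. \<exists>C. circuit_size C \<le> q n \<and>
      (\<forall>x\<in>bitstrings n. cbit C x = b x)))"

text \<open>Nondeterministic/co-nondeterministic circuit families: A n is the circuit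
used on inputs (y, 1^n); wl n is the witness length. The input of A n is y @ w.\<close>
definition poly_family :: "(nat \<Rightarrow> circuit) \<Rightarrow> bool" where
  "poly_family A \<longleftrightarrow> poly_bounded (\<lambda>n. circuit_size (A n))"

definition nd_accept :: "(nat \<Rightarrow> circuit) \<Rightarrow> (nat \<Rightarrow> nat) \<Rightarrow> nat \<Rightarrow> bool list \<Rightarrow> bool" where
  "nd_accept A wl n y \<longleftrightarrow> (\<exists>w\<in>bitstrings (wl n). cbit (A n) (y @ w))"

definition cond_accept :: "(nat \<Rightarrow> circuit) \<Rightarrow> (nat \<Rightarrow> nat) \<Rightarrow> nat \<Rightarrow> bool list \<Rightarrow> bool" where
  "cond_accept A wl n y \<longleftrightarrow> (\<forall>w\<in>bitstrings (wl n). cbit (A n) (y @ w))"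

definition prob_unif :: "nat \<Rightarrow> (bool list \<Rightarrow> bool) \<Rightarrow> real" where
  "prob_unif n P = real (card {x\<in>bitstrings n. P x}) / 2 ^ n"

definition super_core ::
  "(bool list \<Rightarrow> bool) \<Rightarrow> (bool list \<Rightarrow> bool list) \<Rightarrow> (nat \<Rightarrow> nat) \<Rightarrow> bool" where
  "super_core b f m \<longleftrightarrow> poly_circuit_pred b \<and>
     \<not> (\<exists>A1 wl1 A2 wl2 p. poly_family A1 \<and> poly_family A2 \<and> pos_poly p \<and>
          infinite {n.
             prob_unif n (\<lambda>x. \<not> nd_accept A1 wl1 n (f x) \<and> \<not> b x)
               + 1/2 * prob_unif (m n) (\<lambda>y. nd_accept A1 wl1 n y)
               \<ge> 1/2 + 1 / real (p n)
           \<or> prob_unif n (\<lambda>x. cond_accept A2 wl2 n (f x) \<and> b x)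
               + 1/2 * prob_unif (m n) (\<lambda>y. \<not> cond_accept A2 wl2 n y)
               \<ge> 1/2 + 1 / real (p n)})"

definition T1 :: "(bool list \<Rightarrow> bool list) \<Rightarrow> nat \<Rightarrow> bool list set" where
  "T1 f n = {x\<in>bitstrings n. card {x'\<in>bitstrings n. f x' = f x} = 1}"

end

theory Submission
  imports Defs
begin

text \<open>Let T be the set of inputs whose image has a unique preimage and t its density.
For any predicate b, every x \<in> T with \<not> b x is rejected by the nondeterministic test
"some preimage of f x satisfies b", and every x \<in> T with b x is accepted by the
co-nondeterministic test "all preimages of f x satisfy b". Since f is injective on T, the
images of the b-part and of the non-b-part of {0,1}^n together have at least |T| elements.
Hence the two quantities in the definition of a super-core sum to at least
t + t / 2^(1+c), so if t \<ge> 2^(1+c)/(2^(1+c)+1) + 1/p one of them is at least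
1/2 + 1/(2p). Both tests are computed by small circuits that run circuits for f and b on
the witness and compare the output of f with the input.\<close>

lemma eval_gates_append: "eval_gates (gs1 @ gs2) x ws = eval_gates gs2 x (eval_gates gs1 x ws)"
  by (induction gs1 arbitrary: ws) auto

lemma eval_gates_extends: "\<exists>ws'. eval_gates gs x ws = ws @ ws'"
  by (induction gs arbitrary: ws) (auto, metis append.assoc)

lemma length_eval_gates: "length (eval_gates gs x ws) = length ws + length gs"
  by (induction gs arbitrary: ws) auto

lemma wire_append: "i < length ws \<Longrightarrow> wire (ws @ ws') i = wire ws i"
  by (auto simp: wire_def nth_append)

lemma wire_append_shift: "wire (ws0 @ ws) (i + length ws0) = wire ws i"
  by (auto simp: wire_def nth_append)

lemma wire_snoc: "wire (ws @ [v]) (length ws) = v"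
  by (simp add: wire_def)

lemma wire_beyond: "length ws \<le> i \<Longrightarrow> \<not> wire ws i"
  by (auto simp: wire_def)

fun shift_gate :: "nat \<Rightarrow> nat \<Rightarrow> gate \<Rightarrow> gate" where
  "shift_gate L k (Input i) = Input (i + k)"
| "shift_gate L k (Const b) = Const b"
| "shift_gate L k (Not i) = Not (i + L)"
| "shift_gate L k (And i j) = And (i + L) (j + L)"
| "shift_gate L k (Or i j) = Or (i + L) (j + L)"

lemma gate_val_shift_gate:
  "gate_val (shift_gate (length ws0) k g) x (ws0 @ ws) = gate_val g (drop k x) ws"
  by (cases g) (auto simp: wire_append_shift add.commute)

lemma eval_gates_shift_gate:
  "eval_gates (map (shift_gate (length ws0) k) gs) x (ws0 @ ws) = ws0 @ eval_gates gs (drop k x) ws"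
proof (induction gs arbitrary: ws)
  case (Cons g gs)
  then show ?case
    using Cons.IH[of "ws @ [gate_val g (drop k x) ws]"] by (simp add: gate_val_shift_gate)
qed simp

section \<open>Compiling formulas into gates\<close>

datatype fm = FInput nat | FWire nat | FConst bool | FNot fm | FAnd fm fm

fun fm_eval :: "bool list \<Rightarrow> bool list \<Rightarrow> fm \<Rightarrow> bool" where
  "fm_eval x ws (FInput i) = (i < length x \<and> x ! i)"
| "fm_eval x ws (FWire i) = wire ws i"
| "fm_eval x ws (FConst b) = b"
| "fm_eval x ws (FNot \<phi>) = (\<not> fm_eval x ws \<phi>)"
| "fm_eval x ws (FAnd \<phi> \<psi>) = (fm_eval x ws \<phi> \<and> fm_eval x ws \<psi>)"

fun fm_wires_below :: "nat \<Rightarrow> fm \<Rightarrow> bool" where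
  "fm_wires_below L (FWire i) = (i < L)"
| "fm_wires_below L (FNot \<phi>) = fm_wires_below L \<phi>"
| "fm_wires_below L (FAnd \<phi> \<psi>) = (fm_wires_below L \<phi> \<and> fm_wires_below L \<psi>)"
| "fm_wires_below L _ = True"

fun fm_size :: "fm \<Rightarrow> nat" where
  "fm_size (FNot \<phi>) = fm_size \<phi> + 1"
| "fm_size (FAnd \<phi> \<psi>) = fm_size \<phi> + fm_size \<psi> + 1"
| "fm_size _ = 1"

text \<open>compile_fm L \<phi> appends gates after L existing wires and returns them together with
the wire carrying the value of \<phi>.\<close>

fun compile_fm :: "nat \<Rightarrow> fm \<Rightarrow> gate list \<times> nat" where
  "compile_fm L (FInput i) = ([Input i], L)"
| "compile_fm L (FWire i) = ([], i)"
| "compile_fm L (FConst b) = ([Const b], L)"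
| "compile_fm L (FNot \<phi>) = (let (gs, u) = compile_fm L \<phi> in (gs @ [Not u], L + length gs))"
| "compile_fm L (FAnd \<phi> \<psi>) =
     (let (gs1, u1) = compile_fm L \<phi>; (gs2, u2) = compile_fm (L + length gs1) \<psi>
      in (gs1 @ gs2 @ [And u1 u2], L + length gs1 + length gs2))"

lemma fm_wires_below_mono: "fm_wires_below L \<phi> \<Longrightarrow> L \<le> L' \<Longrightarrow> fm_wires_below L' \<phi>"
  by (induction \<phi>) auto

lemma fm_eval_append: "fm_wires_below (length ws) \<phi> \<Longrightarrow> fm_eval x (ws @ ws') \<phi> = fm_eval x ws \<phi>"
  by (induction \<phi>) (auto simp: wire_append)

lemma compile_fm_output:
  "fm_wires_below L \<phi> \<Longrightarrow> snd (compile_fm L \<phi>) < L + length (fst (compile_fm L \<phi>))"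
  by (induction \<phi> arbitrary: L) (auto split: prod.splits)

lemma compile_fm_size: "length (fst (compile_fm L \<phi>)) \<le> fm_size \<phi>"
proof (induction \<phi> arbitrary: L)
  case (FNot \<phi>)
  then show ?case by (cases "compile_fm L \<phi>") (use FNot.IH[of L] in auto)
next
  case (FAnd \<phi> \<psi>)
  obtain gs1 u1 where 1: "compile_fm L \<phi> = (gs1, u1)" by fastforce
  obtain gs2 u2 where 2: "compile_fm (L + length gs1) \<psi> = (gs2, u2)" by fastforce
  show ?case using FAnd.IH(1)[of L] FAnd.IH(2)[of "L + length gs1"] 1 2 by simp
qed auto

lemma compile_fm_correct:
  assumes "length ws = L" "fm_wires_below L \<phi>"
  shows "wire (eval_gates (fst (compile_fm L \<phi>)) x ws) (snd (compile_fm L \<phi>)) = fm_eval x ws \<phi>"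
  using assms
proof (induction \<phi> arbitrary: L ws)
  case (FNot \<phi>)
  obtain gs u where c: "compile_fm L \<phi> = (gs, u)" by fastforce
  have "length (eval_gates gs x ws) = L + length gs"
    using FNot.prems by (simp add: length_eval_gates)
  then show ?case using FNot c
    by (simp add: eval_gates_append) (metis wire_snoc fst_conv snd_conv)
next
  case (FAnd \<phi> \<psi>)
  obtain gs1 u1 where c1: "compile_fm L \<phi> = (gs1, u1)" by fastforce
  obtain gs2 u2 where c2: "compile_fm (L + length gs1) \<psi> = (gs2, u2)" by fastforce
  define E1 where "E1 = eval_gates gs1 x ws"
  define E2 where "E2 = eval_gates gs2 x E1"
  obtain ws1 where E1: "E1 = ws @ ws1" using eval_gates_extends unfolding E1_def by blast
  obtain ws2 where E2: "E2 = E1 @ ws2" using eval_gates_extends unfolding E2_def by blast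
  have len1: "length E1 = L + length gs1"
    using FAnd.prems by (simp add: E1_def length_eval_gates)
  have len2: "length E2 = L + length gs1 + length gs2"
    using len1 by (simp add: E2_def length_eval_gates)
  have "u1 < length E1" using compile_fm_output[of L \<phi>] FAnd.prems c1 len1 by simp
  then have v1: "wire E2 u1 = fm_eval x ws \<phi>"
    using FAnd.IH(1)[of ws L] FAnd.prems c1 E2 by (simp add: E1_def wire_append)
  have "fm_wires_below (L + length gs1) \<psi>"
    using FAnd.prems fm_wires_below_mono by auto
  then have v2: "wire E2 u2 = fm_eval x ws \<psi>"
    using FAnd.IH(2)[of E1 "L + length gs1"] FAnd.prems c2 len1 E1 fm_eval_append
    by (simp add: E2_def)
  show ?case using c1 c2 v1 v2 len2
    by (simp add: eval_gates_append flip: E1_def E2_def) (metis wire_snoc)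
qed (auto simp: wire_def)

definition parallel_gates :: "circuit \<Rightarrow> circuit \<Rightarrow> nat \<Rightarrow> gate list" where
  "parallel_gates Cf Cb K =
     map (shift_gate 0 K) (fst Cf) @ map (shift_gate (length (fst Cf)) K) (fst Cb)"

lemma eval_parallel_gates:
  "eval_gates (parallel_gates Cf Cb K) z [] =
     eval_gates (fst Cf) (drop K z) [] @ eval_gates (fst Cb) (drop K z) []"
  using eval_gates_shift_gate[of "[]" K "fst Cf" z "[]"]
    eval_gates_shift_gate[of "eval_gates (fst Cf) (drop K z) []" K "fst Cb" z "[]"]
  by (simp add: parallel_gates_def eval_gates_append length_eval_gates)

text \<open>Cf and Cb both read the input from position K onwards; \<phi> refers to the wires of
Cf followed by those of Cb, and to the whole input.\<close>

definition fm_on_circuits :: "circuit \<Rightarrow> circuit \<Rightarrow> nat \<Rightarrow> fm \<Rightarrow> circuit" where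
  "fm_on_circuits Cf Cb K \<phi> =
     (let L = length (fst Cf) + length (fst Cb)
      in (parallel_gates Cf Cb K @ fst (compile_fm L \<phi>), [snd (compile_fm L \<phi>)]))"

lemma circuit_size_fm_on_circuits:
  "circuit_size (fm_on_circuits Cf Cb K \<phi>) \<le> circuit_size Cf + circuit_size Cb + fm_size \<phi> + 1"
  using compile_fm_size[of "length (fst Cf) + length (fst Cb)" \<phi>]
  by (simp add: fm_on_circuits_def circuit_size_def parallel_gates_def Let_def)

lemma cbit_fm_on_circuits:
  assumes "fm_wires_below (length (fst Cf) + length (fst Cb)) \<phi>"
  shows "cbit (fm_on_circuits Cf Cb K \<phi>) z =
           fm_eval z (eval_gates (fst Cf) (drop K z) [] @ eval_gates (fst Cb) (drop K z) []) \<phi>"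
  using assms compile_fm_correct[of "eval_gates (fst Cf) (drop K z) [] @ eval_gates (fst Cb) (drop K z) []"]
  by (simp add: cbit_def eval_circuit_def fm_on_circuits_def Let_def eval_gates_append
      eval_parallel_gates length_eval_gates)

section \<open>Circuits testing a witness\<close>

definition iff_fm :: "fm \<Rightarrow> fm \<Rightarrow> fm" where
  "iff_fm \<phi> \<psi> = FAnd (FNot (FAnd \<phi> (FNot \<psi>))) (FNot (FAnd (FNot \<phi>) \<psi>))"

definition conj_fm :: "fm list \<Rightarrow> fm" where
  "conj_fm \<phi>s = foldr FAnd \<phi>s (FConst True)"

text \<open>Output wires of a malformed circuit (pointing beyond its gates) read as False,
as in eval_circuit.\<close>

definition output_fm :: "circuit \<Rightarrow> nat \<Rightarrow> fm" where
  "output_fm Cf j = (if snd Cf ! j < length (fst Cf) then FWire (snd Cf ! j) else FConst False)"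

definition output_eq_fm :: "circuit \<Rightarrow> nat \<Rightarrow> fm" where
  "output_eq_fm Cf K = conj_fm (map (\<lambda>j. iff_fm (output_fm Cf j) (FInput j)) [0..<K])"

definition cbit_fm :: "circuit \<Rightarrow> circuit \<Rightarrow> fm" where
  "cbit_fm Cf Cb =
     (case snd Cb of
        [u] \<Rightarrow> if u < length (fst Cb) then FWire (length (fst Cf) + u) else FConst False
      | _ \<Rightarrow> FConst False)"

lemma fm_eval_conj_fm: "fm_eval z ws (conj_fm \<phi>s) = (\<forall>\<phi>\<in>set \<phi>s. fm_eval z ws \<phi>)"
  by (induction \<phi>s) (auto simp: conj_fm_def)

lemma fm_wires_below_conj_fm: "fm_wires_below L (conj_fm \<phi>s) = (\<forall>\<phi>\<in>set \<phi>s. fm_wires_below L \<phi>)"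
  by (induction \<phi>s) (auto simp: conj_fm_def)

lemma fm_size_conj_fm: "fm_size (conj_fm \<phi>s) = sum_list (map fm_size \<phi>s) + length \<phi>s + 1"
  by (induction \<phi>s) (auto simp: conj_fm_def)

lemma fm_size_output_fm: "fm_size (output_fm Cf j) = 1"
  by (simp add: output_fm_def)

lemma fm_size_output_eq_fm: "fm_size (output_eq_fm Cf K) = 12 * K + 1"
  by (simp add: output_eq_fm_def fm_size_conj_fm iff_fm_def fm_size_output_fm o_def sum_list_triv)

lemma fm_size_cbit_fm: "fm_size (cbit_fm Cf Cb) = 1"
  by (auto simp: cbit_fm_def split: list.split)

lemma fm_wires_below_output_eq_fm: "fm_wires_below (length (fst Cf) + Lb) (output_eq_fm Cf K)"
  by (auto simp: output_eq_fm_def fm_wires_below_conj_fm iff_fm_def output_fm_def)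

lemma fm_wires_below_cbit_fm: "fm_wires_below (length (fst Cf) + length (fst Cb)) (cbit_fm Cf Cb)"
  by (auto simp: cbit_fm_def split: list.split)

lemma fm_eval_output_eq_fm:
  assumes "length wsf = length (fst Cf)" "length y = K" "length (map (wire wsf) (snd Cf)) = K"
  shows "fm_eval (y @ w) (wsf @ wsb) (output_eq_fm Cf K) \<longleftrightarrow> map (wire wsf) (snd Cf) = y"
proof -
  have "fm_eval (y @ w) (wsf @ wsb) (output_fm Cf j) = wire wsf (snd Cf ! j)" for j
    using assms(1) by (auto simp: output_fm_def wire_append wire_beyond)
  then have "fm_eval (y @ w) (wsf @ wsb) (output_eq_fm Cf K) \<longleftrightarrow>
      (\<forall>j<K. wire wsf (snd Cf ! j) = y ! j)"
    using assms(2) by (auto simp: output_eq_fm_def fm_eval_conj_fm iff_fm_def nth_append)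
  also have "\<dots> \<longleftrightarrow> map (wire wsf) (snd Cf) = y"
    using assms(2,3) by (auto simp: list_eq_iff_nth_eq)
  finally show ?thesis .
qed

lemma fm_eval_cbit_fm:
  assumes "length wsf = length (fst Cf)" "length wsb = length (fst Cb)"
  shows "fm_eval z (wsf @ wsb) (cbit_fm Cf Cb) \<longleftrightarrow> map (wire wsb) (snd Cb) = [True]"
proof (cases "snd Cb")
  case (Cons u us)
  then show ?thesis using assms by (cases us) (auto simp: cbit_fm_def wire_def nth_append)
qed (simp add: cbit_fm_def)

definition witness_test :: "circuit \<Rightarrow> circuit \<Rightarrow> nat \<Rightarrow> circuit" where
  "witness_test Cf Cb K = fm_on_circuits Cf Cb K (FAnd (output_eq_fm Cf K) (cbit_fm Cf Cb))"

definition co_witness_test :: "circuit \<Rightarrow> circuit \<Rightarrow> nat \<Rightarrow> circuit" where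
  "co_witness_test Cf Cb K =
     fm_on_circuits Cf Cb K (FNot (FAnd (output_eq_fm Cf K) (FNot (cbit_fm Cf Cb))))"

lemma cbit_witness_test:
  assumes "length y = K" "length (eval_circuit Cf w) = K"
  shows "cbit (witness_test Cf Cb K) (y @ w) \<longleftrightarrow> eval_circuit Cf w = y \<and> cbit Cb w"
    and "cbit (co_witness_test Cf Cb K) (y @ w) \<longleftrightarrow> (eval_circuit Cf w = y \<longrightarrow> cbit Cb w)"
proof -
  let ?wsf = "eval_gates (fst Cf) w []" and ?wsb = "eval_gates (fst Cb) w []"
  have len: "length ?wsf = length (fst Cf)" "length ?wsb = length (fst Cb)"
    by (simp_all add: length_eval_gates)
  have "fm_eval (y @ w) (?wsf @ ?wsb) (output_eq_fm Cf K) \<longleftrightarrow> eval_circuit Cf w = y"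
    using fm_eval_output_eq_fm[OF len(1)] assms by (simp add: eval_circuit_def)
  moreover have "fm_eval (y @ w) (?wsf @ ?wsb) (cbit_fm Cf Cb) \<longleftrightarrow> cbit Cb w"
    using fm_eval_cbit_fm[OF len] by (simp add: cbit_def eval_circuit_def)
  moreover have "drop K (y @ w) = w" using assms(1) by simp
  ultimately show "cbit (witness_test Cf Cb K) (y @ w) \<longleftrightarrow> eval_circuit Cf w = y \<and> cbit Cb w"
    and "cbit (co_witness_test Cf Cb K) (y @ w) \<longleftrightarrow> (eval_circuit Cf w = y \<longrightarrow> cbit Cb w)"
    by (simp_all add: witness_test_def co_witness_test_def cbit_fm_on_circuits
        fm_wires_below_output_eq_fm fm_wires_below_cbit_fm)
qed

lemma circuit_size_witness_test:
  "circuit_size (witness_test Cf Cb K) \<le> circuit_size Cf + circuit_size Cb + 12 * K + 6"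
  using circuit_size_fm_on_circuits[of Cf Cb K "FAnd (output_eq_fm Cf K) (cbit_fm Cf Cb)"]
  by (simp add: witness_test_def fm_size_output_eq_fm fm_size_cbit_fm)

lemma circuit_size_co_witness_test:
  "circuit_size (co_witness_test Cf Cb K) \<le> circuit_size Cf + circuit_size Cb + 12 * K + 6"
  using circuit_size_fm_on_circuits[of Cf Cb K "FNot (FAnd (output_eq_fm Cf K) (FNot (cbit_fm Cf Cb)))"]
  by (simp add: co_witness_test_def fm_size_output_eq_fm fm_size_cbit_fm)

section \<open>Polynomial bounds\<close>

lemma poly_bounded_mono: "poly_bounded q' \<Longrightarrow> (\<And>n. q n \<le> q' n) \<Longrightarrow> poly_bounded q"
  unfolding poly_bounded_def by (meson le_trans)

lemma power_le_power_plus_one: "k \<le> K \<Longrightarrow> (n::nat) ^ k \<le> n ^ K + 1"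
  by (cases "n = 0") (simp_all add: power_0_left le_SucI power_increasing)

lemma double_power_le: "2 * (n::nat) ^ k \<le> n ^ Suc k + 2"
proof (cases "n \<le> 1")
  case True
  then have "n = 0 \<or> n = 1" by auto
  then show ?thesis by (auto simp: power_0_left)
next
  case False
  then have "2 * n ^ k \<le> n * n ^ k" by (intro mult_le_mono1) simp
  then show ?thesis by (simp only: power_Suc)
qed

lemma poly_bounded_add:
  assumes "poly_bounded q1" "poly_bounded q2"
  shows "poly_bounded (\<lambda>n. q1 n + q2 n)"
proof -
  obtain k1 k2 where k: "\<And>n. q1 n \<le> n ^ k1 + k1" "\<And>n. q2 n \<le> n ^ k2 + k2"
    using assms by (auto simp: poly_bounded_def)
  define K where "K = k1 + k2 + 5"
  have "q1 n + q2 n \<le> n ^ K + K" for n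
  proof -
    have "q1 n + q2 n \<le> 2 * n ^ (k1 + k2) + 2 + k1 + k2"
      using k[of n] power_le_power_plus_one[of k1 "k1 + k2" n]
        power_le_power_plus_one[of k2 "k1 + k2" n] by simp
    also have "\<dots> \<le> n ^ Suc (k1 + k2) + 4 + k1 + k2"
      using double_power_le[of n "k1 + k2"] by simp
    also have "n ^ Suc (k1 + k2) \<le> n ^ K + 1"
      by (rule power_le_power_plus_one) (simp add: K_def)
    finally show ?thesis by (simp add: K_def)
  qed
  then show ?thesis unfolding poly_bounded_def by blast
qed

lemma poly_bounded_linear: "poly_bounded (\<lambda>n. a * n + b)"
proof -
  have linear_le: "a * n \<le> n ^ Suc a + a" for n :: nat
  proof (cases "n \<le> 1")
    case False
    have "a < 2 ^ a" by (rule less_exp)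
    also have "\<dots> \<le> n ^ a" using False by (intro power_mono) auto
    finally have "a * n \<le> n ^ a * n" by (intro mult_le_mono1) simp
    then show ?thesis by (metis power_Suc mult.commute trans_le_add1)
  next
    case True
    then have "n = 0 \<or> n = 1" by auto
    then show ?thesis by auto
  qed
  have "a * n + b \<le> n ^ (a + b + 1) + (a + b + 1)" for n
    using linear_le[of n] power_le_power_plus_one[of "Suc a" "a + b + 1" n] by simp
  then show ?thesis unfolding poly_bounded_def by blast
qed

lemma pos_poly_double: "pos_poly p \<Longrightarrow> pos_poly (\<lambda>n. 2 * p n)"
  using poly_bounded_add[of p p] by (simp add: pos_poly_def mult_2)

lemma image_test_families:
  assumes len: "\<forall>x. length (f x) = length x + c"
    and "poly_circuit_fun f" "poly_circuit_pred b"
  obtains A1 A2 where "poly_family A1" "poly_family A2"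
    "\<And>n y. length y = n + c \<Longrightarrow> nd_accept A1 (\<lambda>n. n) n y \<longleftrightarrow> (\<exists>w\<in>bitstrings n. f w = y \<and> b w)"
    "\<And>n y. length y = n + c \<Longrightarrow> cond_accept A2 (\<lambda>n. n) n y \<longleftrightarrow> (\<forall>w\<in>bitstrings n. f w = y \<longrightarrow> b w)"
proof -
  obtain qf where "poly_bounded qf"
    and "\<forall>n. \<exists>C. circuit_size C \<le> qf n \<and> (\<forall>x\<in>bitstrings n. eval_circuit C x = f x)"
    using \<open>poly_circuit_fun f\<close> unfolding poly_circuit_fun_def by blast
  then obtain CF where qf: "poly_bounded qf" "\<And>n. circuit_size (CF n) \<le> qf n"
    and CF: "\<And>n x. x \<in> bitstrings n \<Longrightarrow> eval_circuit (CF n) x = f x"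
    by metis
  obtain qb where "poly_bounded qb"
    and "\<forall>n. \<exists>C. circuit_size C \<le> qb n \<and> (\<forall>x\<in>bitstrings n. cbit C x = b x)"
    using \<open>poly_circuit_pred b\<close> unfolding poly_circuit_pred_def by blast
  then obtain CB where qb: "poly_bounded qb" "\<And>n. circuit_size (CB n) \<le> qb n"
    and CB: "\<And>n x. x \<in> bitstrings n \<Longrightarrow> cbit (CB n) x = b x"
    by metis
  define A1 where "A1 n = witness_test (CF n) (CB n) (n + c)" for n
  define A2 where "A2 n = co_witness_test (CF n) (CB n) (n + c)" for n
  have size_bound: "poly_bounded (\<lambda>n. (qf n + qb n) + (12 * n + (12 * c + 6)))"
    by (intro poly_bounded_add qf qb poly_bounded_linear)
  have "circuit_size (A1 n) \<le> (qf n + qb n) + (12 * n + (12 * c + 6))"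
    and "circuit_size (A2 n) \<le> (qf n + qb n) + (12 * n + (12 * c + 6))" for n
    using circuit_size_witness_test[of "CF n" "CB n" "n + c"] qf(2)[of n] qb(2)[of n]
      circuit_size_co_witness_test[of "CF n" "CB n" "n + c"]
    by (simp_all add: A1_def A2_def)
  then have "poly_family A1" "poly_family A2"
    unfolding poly_family_def by (auto intro: poly_bounded_mono[OF size_bound])
  moreover have "cbit (A1 n) (y @ w) \<longleftrightarrow> f w = y \<and> b w"
    and "cbit (A2 n) (y @ w) \<longleftrightarrow> (f w = y \<longrightarrow> b w)"
    if "length y = n + c" "w \<in> bitstrings n" for n y w
    using cbit_witness_test[of y "n + c" "CF n" w "CB n"] that CF[OF that(2)] CB[OF that(2)] len
    by (simp_all add: A1_def A2_def bitstrings_def)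
  ultimately show thesis
    by (intro that[of A1 A2]) (auto simp: nd_accept_def cond_accept_def)
qed

section \<open>Counting\<close>

lemma finite_bitstrings: "finite (bitstrings n)"
  using finite_lists_length_eq[of "UNIV :: bool set" n] by (simp add: bitstrings_def)

lemma T1_subset: "T1 f n \<subseteq> bitstrings n"
  by (auto simp: T1_def)

lemma T1_unique:
  assumes "x \<in> T1 f n" "w \<in> bitstrings n" "f w = f x"
  shows "w = x"
proof -
  have x: "x \<in> bitstrings n" using assms(1) by (simp add: T1_def)
  have "card {x' \<in> bitstrings n. f x' = f x} = 1" using assms(1) by (simp add: T1_def)
  then obtain a where fibre: "{x' \<in> bitstrings n. f x' = f x} = {a}" by (rule card_1_singletonE)
  have "x \<in> {x' \<in> bitstrings n. f x' = f x}" "w \<in> {x' \<in> bitstrings n. f x' = f x}"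
    using x assms(2,3) by simp_all
  then have "x = a" "w = a" unfolding fibre by simp_all
  then show ?thesis by simp
qed

lemma card_le_unambiguous_fibres:
  assumes "finite S" "T \<subseteq> S" "\<And>x w. x \<in> T \<Longrightarrow> w \<in> S \<Longrightarrow> f w = f x \<Longrightarrow> w = x"
  shows "card T \<le> card {x \<in> S. \<not> (\<exists>w\<in>S. f w = f x \<and> b w) \<and> \<not> b x}
                  + card {x \<in> S. (\<forall>w\<in>S. f w = f x \<longrightarrow> b w) \<and> b x}"
    (is "_ \<le> card ?R0 + card ?R1")
proof -
  have "T \<subseteq> ?R0 \<union> ?R1"
  proof
    fix x assume x: "x \<in> T"
    then have "x \<in> S" "\<forall>w\<in>S. f w = f x \<longrightarrow> b w = b x" using assms(2,3) by auto
    then show "x \<in> ?R0 \<union> ?R1" by (cases "b x") auto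
  qed
  then have "card T \<le> card (?R0 \<union> ?R1)" using assms(1) by (intro card_mono) auto
  also have "\<dots> \<le> card ?R0 + card ?R1" by (rule card_Un_le)
  finally show ?thesis .
qed

lemma card_le_image_partition:
  assumes "finite S" "T \<subseteq> S" "inj_on f T"
  shows "card T \<le> card (f ` {x \<in> S. b x}) + card (f ` {x \<in> S. \<not> b x})"
proof -
  have "card T = card (f ` T)" using assms(3) by (simp add: card_image)
  also have "\<dots> \<le> card (f ` {x \<in> S. b x} \<union> f ` {x \<in> S. \<not> b x})"
    using assms(1,2) by (intro card_mono) auto
  also have "\<dots> \<le> card (f ` {x \<in> S. b x}) + card (f ` {x \<in> S. \<not> b x})"
    by (rule card_Un_le)
  finally show ?thesis .
qed

lemma advantage_sum_ge:
  assumes lenf: "\<And>x. x \<in> bitstrings n \<Longrightarrow> length (f x) = n + c"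
    and acc1: "\<And>y. length y = n + c \<Longrightarrow> Acc1 y \<longleftrightarrow> (\<exists>w\<in>bitstrings n. f w = y \<and> b w)"
    and acc2: "\<And>y. length y = n + c \<Longrightarrow> Acc2 y \<longleftrightarrow> (\<forall>w\<in>bitstrings n. f w = y \<longrightarrow> b w)"
  defines "t \<equiv> real (card (T1 f n)) / 2 ^ n"
  shows "(prob_unif n (\<lambda>x. \<not> Acc1 (f x) \<and> \<not> b x) + 1/2 * prob_unif (n + c) Acc1)
       + (prob_unif n (\<lambda>x. Acc2 (f x) \<and> b x) + 1/2 * prob_unif (n + c) (\<lambda>y. \<not> Acc2 y))
       \<ge> t + t / 2 ^ (1 + c)"
proof -
  define S where "S = bitstrings n"
  let ?R0 = "{x \<in> S. \<not> (\<exists>w\<in>S. f w = f x \<and> b w) \<and> \<not> b x}"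
  let ?R1 = "{x \<in> S. (\<forall>w\<in>S. f w = f x \<longrightarrow> b w) \<and> b x}"
  have acc1S: "Acc1 (f x) \<longleftrightarrow> (\<exists>w\<in>S. f w = f x \<and> b w)"
    and acc2S: "Acc2 (f x) \<longleftrightarrow> (\<forall>w\<in>S. f w = f x \<longrightarrow> b w)" if "x \<in> S" for x
    using acc1 acc2 lenf that by (simp_all add: S_def)
  have "{x \<in> S. \<not> Acc1 (f x) \<and> \<not> b x} = ?R0" "{x \<in> S. Acc2 (f x) \<and> b x} = ?R1"
    using acc1S acc2S by blast+
  moreover have "{y \<in> bitstrings (n + c). Acc1 y} = f ` {x \<in> S. b x}"
    using acc1 acc1S lenf by (auto simp: S_def bitstrings_def)
  moreover have "{y \<in> bitstrings (n + c). \<not> Acc2 y} = f ` {x \<in> S. \<not> b x}"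
    using acc2 acc2S lenf by (auto simp: S_def bitstrings_def)
  ultimately have probs:
    "prob_unif n (\<lambda>x. \<not> Acc1 (f x) \<and> \<not> b x) + prob_unif n (\<lambda>x. Acc2 (f x) \<and> b x)
       = real (card ?R0 + card ?R1) / 2 ^ n"
    "prob_unif (n + c) Acc1 + prob_unif (n + c) (\<lambda>y. \<not> Acc2 y)
       = real (card (f ` {x \<in> S. b x}) + card (f ` {x \<in> S. \<not> b x})) / 2 ^ (n + c)"
    by (simp_all add: prob_unif_def S_def add_divide_distrib)
  have fin: "finite S" "T1 f n \<subseteq> S" by (simp_all add: S_def finite_bitstrings T1_subset)
  have uniq: "\<And>x w. x \<in> T1 f n \<Longrightarrow> w \<in> S \<Longrightarrow> f w = f x \<Longrightarrow> w = x"
    using T1_unique by (simp add: S_def)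
  have "card (T1 f n) \<le> card ?R0 + card ?R1"
    using fin uniq by (rule card_le_unambiguous_fibres)
  then have bound_T: "t \<le> real (card ?R0 + card ?R1) / 2 ^ n"
    unfolding t_def by (intro divide_right_mono) simp_all
  have "inj_on f (T1 f n)" using fin(2) uniq by (intro inj_onI) blast
  then have "card (T1 f n) \<le> card (f ` {x \<in> S. b x}) + card (f ` {x \<in> S. \<not> b x})"
    using fin by (intro card_le_image_partition)
  moreover have "t / 2 ^ (1 + c) = 1/2 * (real (card (T1 f n)) / 2 ^ (n + c))"
    by (simp add: t_def power_add)
  ultimately have "t / 2 ^ (1 + c)
      \<le> 1/2 * (real (card (f ` {x \<in> S. b x}) + card (f ` {x \<in> S. \<not> b x})) / 2 ^ (n + c))"
    by (simp only:) (intro mult_left_mono divide_right_mono; simp)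
  with bound_T have "t + t / 2 ^ (1 + c)
      \<le> (prob_unif n (\<lambda>x. \<not> Acc1 (f x) \<and> \<not> b x) + prob_unif n (\<lambda>x. Acc2 (f x) \<and> b x))
        + 1/2 * (prob_unif (n + c) Acc1 + prob_unif (n + c) (\<lambda>y. \<not> Acc2 y))"
    unfolding probs by (rule add_mono)
  then show ?thesis by argo
qed

lemma advantage_from_density:
  fixes t a P X Y :: real
  assumes "t \<ge> a / (a + 1) + 1 / P" "a > 0" "P > 0" "X + Y \<ge> t + t / a"
  shows "X \<ge> 1/2 + 1 / (2 * P) \<or> Y \<ge> 1/2 + 1 / (2 * P)"
proof -
  have "(a / (a + 1) + 1 / P) * ((a + 1) / a) \<le> t * ((a + 1) / a)"
    using assms(1,2) by (intro mult_right_mono) auto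
  moreover have "(a / (a + 1) + 1 / P) * ((a + 1) / a) = 1 + 1 / P + 1 / (a * P)"
    using assms(2,3) by (simp add: divide_simps) (simp add: algebra_simps)
  moreover have "t * ((a + 1) / a) = t + t / a"
    using assms(2) by (simp add: field_simps)
  moreover have "1 / (a * P) \<ge> 0"
    using assms(2,3) by simp
  ultimately have "X + Y \<ge> 1 + 1 / P"
    using assms(4) by linarith
  then show ?thesis by linarith
qed

lemma advantage_of_tests:
  assumes "\<And>x. x \<in> bitstrings n \<Longrightarrow> length (f x) = n + c"
    and "\<And>y. length y = n + c \<Longrightarrow> Acc1 y \<longleftrightarrow> (\<exists>w\<in>bitstrings n. f w = y \<and> b w)"
    and "\<And>y. length y = n + c \<Longrightarrow> Acc2 y \<longleftrightarrow> (\<forall>w\<in>bitstrings n. f w = y \<longrightarrow> b w)"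
    and density: "real (card (T1 f n)) / 2 ^ n \<ge> 2 ^ (1 + c) / (2 ^ (1 + c) + 1) + 1 / real q"
    and "q > 0"
  shows "prob_unif n (\<lambda>x. \<not> Acc1 (f x) \<and> \<not> b x) + 1/2 * prob_unif (n + c) Acc1
           \<ge> 1/2 + 1 / real (2 * q)
       \<or> prob_unif n (\<lambda>x. Acc2 (f x) \<and> b x) + 1/2 * prob_unif (n + c) (\<lambda>y. \<not> Acc2 y)
           \<ge> 1/2 + 1 / real (2 * q)"
  using advantage_from_density[OF density _ _ advantage_sum_ge[OF assms(1-3)]] \<open>q > 0\<close> by simp

theorem theorem6p7:
  fixes f :: "bool list \<Rightarrow> bool list" and c :: nat
  assumes "\<forall>x. length (f x) = length x + c"
    and "poly_circuit_fun f"
    and "\<exists>p. pos_poly p \<and> infinite {n.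
           real (card (T1 f n)) / 2 ^ n
             \<ge> 2 ^ (1 + c) / (2 ^ (1 + c) + 1) + 1 / real (p n)}"
  shows "\<not> (\<exists>b. super_core b f (\<lambda>n. n + c))"
proof
  assume "\<exists>b. super_core b f (\<lambda>n. n + c)"
  then obtain b where core: "super_core b f (\<lambda>n. n + c)" ..
  then have "poly_circuit_pred b" by (simp add: super_core_def)
  with assms(1,2) obtain A1 A2 where families: "poly_family A1" "poly_family A2"
    and acc1: "\<And>n y. length y = n + c \<Longrightarrow> nd_accept A1 (\<lambda>n. n) n y \<longleftrightarrow> (\<exists>w\<in>bitstrings n. f w = y \<and> b w)"
    and acc2: "\<And>n y. length y = n + c \<Longrightarrow> cond_accept A2 (\<lambda>n. n) n y \<longleftrightarrow> (\<forall>w\<in>bitstrings n. f w = y \<longrightarrow> b w)"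
    by (rule image_test_families) blast
  obtain p where p: "pos_poly p" and dense: "infinite {n. real (card (T1 f n)) / 2 ^ n
      \<ge> 2 ^ (1 + c) / (2 ^ (1 + c) + 1) + 1 / real (p n)}"
    using assms(3) by blast
  let ?advantage = "\<lambda>n.
      prob_unif n (\<lambda>x. \<not> nd_accept A1 (\<lambda>n. n) n (f x) \<and> \<not> b x)
        + 1/2 * prob_unif (n + c) (\<lambda>y. nd_accept A1 (\<lambda>n. n) n y) \<ge> 1/2 + 1 / real (2 * p n)
    \<or> prob_unif n (\<lambda>x. cond_accept A2 (\<lambda>n. n) n (f x) \<and> b x)
        + 1/2 * prob_unif (n + c) (\<lambda>y. \<not> cond_accept A2 (\<lambda>n. n) n y) \<ge> 1/2 + 1 / real (2 * p n)"
  have "{n. real (card (T1 f n)) / 2 ^ n \<ge> 2 ^ (1 + c) / (2 ^ (1 + c) + 1) + 1 / real (p n)}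
      \<subseteq> {n. ?advantage n}"
  proof (intro subsetI, unfold mem_Collect_eq)
    fix n assume density: "real (card (T1 f n)) / 2 ^ n
      \<ge> 2 ^ (1 + c) / (2 ^ (1 + c) + 1) + 1 / real (p n)"
    show "?advantage n"
      by (rule advantage_of_tests[OF _ acc1 acc2 density])
        (use assms(1) p in \<open>auto simp: bitstrings_def pos_poly_def\<close>)
  qed
  then have "infinite {n. ?advantage n}" using dense finite_subset by blast
  then show False
    using core families pos_poly_double[OF p] unfolding super_core_def by blast
qed

end
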